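(* The splitting graph $\mathrm{Spltg}(B_G)$ of the bull graph $B_G$ admits a signed product cordial labeling.
   Context: A graph $G$ is signed product cordial if there is a vertex labeling $\alpha: V(G)\to\{1,-1\}$ such that, with the induced edge labeling $\alpha^*(uv)=\alpha(u)\alpha(v)$, we have $|v_\alpha(-1)-v_\alpha(1)|\le 1$ and $|e_{\alpha^*}(-1)-e_{\alpha^*}(1)|\le 1$. Here $v_\alpha(x)$ is the number of vertices labeled $x$ and $e_{\alpha^*}(x)$ is the number of edges labeled $x$; such an $\alpha$ is called a signed product cordial labeling. The splitting graph $\mathrm{Spltg}(G)$ of a graph $G$ is obtained from $G$ by adding, for each vertex $v$ of $G$, a new vertex $v'$ made adjacent to exactly the neighbors of $v$ in $G$. The bull graph $B_G$ has vertices $v_1,\dots,v_5$ and edges $v_1v_2, v_2v_3, v_3v_4, v_4v_5, v_2v_4$. Equivalently, it is a triangle $v_2v_3v_4$ with a pendant vertex attached at $v_2$ and another at $v_4$. *)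

theory Defs
  imports Main
begin

definition simple_graph :: "'a set \<Rightarrow> 'a set set \<Rightarrow> bool" where
  "simple_graph V E \<longleftrightarrow> finite V \<and> (\<forall>e\<in>E. e \<subseteq> V \<and> card e = 2)"

definition edge_label :: "('a \<Rightarrow> int) \<Rightarrow> 'a set \<Rightarrow> int" where
  "edge_label f e = (\<Prod>v\<in>e. f v)"

definition signed_product_cordial_labeling ::
  "'a set \<Rightarrow> 'a set set \<Rightarrow> ('a \<Rightarrow> int) \<Rightarrow> bool" where
  "signed_product_cordial_labeling V E f \<longleftrightarrow>
     (\<forall>v\<in>V. f v = 1 \<or> f v = -1) \<and>
     \<bar>int (card {v\<in>V. f v = -1}) - int (card {v\<in>V. f v = 1})\<bar> \<le> 1 \<and>
     \<bar>int (card {e\<in>E. edge_label f e = -1}) - int (card {e\<in>E. edge_label f e = 1})\<bar> \<le> 1"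

definition signed_product_cordial :: "'a set \<Rightarrow> 'a set set \<Rightarrow> bool" where
  "signed_product_cordial V E \<longleftrightarrow> (\<exists>f. signed_product_cordial_labeling V E f)"

text \<open>Splitting graph: original vertex v is Inl v, its new copy v' is Inr v.
  Edges: all edges of G, plus {v', w} for every edge {v,w} of G.\<close>
definition splitting_vertices :: "'a set \<Rightarrow> ('a + 'a) set" where
  "splitting_vertices V = Inl ` V \<union> Inr ` V"

definition splitting_edges :: "'a set set \<Rightarrow> ('a + 'a) set set" where
  "splitting_edges E =
     {{Inl u, Inl w} | u w. {u, w} \<in> E} \<union>
     {{Inr u, Inl w} | u w. {u, w} \<in> E}"

definition bull_vertices :: "nat set" where
  "bull_vertices = {1, 2, 3, 4, 5}"

definition bull_edges :: "nat set set" where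
  "bull_edges = {{1, 2}, {2, 3}, {3, 4}, {4, 5}, {2, 4}}"

end

(* Label v1, ..., v4 and the copy v2' by 1 and the remaining five vertices by -1. Of the 15 edges
   of the splitting graph, 8 then get label 1 and 7 get label -1. *)

theory Submission
  imports Defs
begin

lemma Collect_mem_insert:
  "{x \<in> insert a A. P x} = (if P a then insert a {x \<in> A. P x} else {x \<in> A. P x})"
  by auto

lemma splitting_edges_empty: "splitting_edges {} = {}"
  by (simp add: splitting_edges_def)

lemma splitting_edges_insert:
  assumes "a \<noteq> b"
  shows "splitting_edges (insert {a, b} E) =
    insert {Inl a, Inl b} (insert {Inr a, Inl b} (insert {Inr b, Inl a} (splitting_edges E)))"
  using assms by (auto simp: splitting_edges_def doubleton_eq_iff)

lemma splitting_vertices_insert: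
  "splitting_vertices (insert v V) = insert (Inl v) (insert (Inr v) (splitting_vertices V))"
  by (auto simp: splitting_vertices_def)

lemma splitting_vertices_empty: "splitting_vertices {} = {}"
  by (simp add: splitting_vertices_def)

lemma edge_label_doubleton: "u \<noteq> v \<Longrightarrow> edge_label f {u, v} = f u * f v"
  by (simp add: edge_label_def)

lemma splitting_vertices_bull:
  "splitting_vertices bull_vertices =
    {Inl 1, Inr 1, Inl 2, Inr 2, Inl 3, Inr 3, Inl 4, Inr 4, Inl 5, Inr 5}"
  by (simp add: bull_vertices_def splitting_vertices_insert splitting_vertices_empty)

lemma splitting_edges_bull:
  "splitting_edges bull_edges =
    {{Inl 1, Inl 2}, {Inr 1, Inl 2}, {Inr 2, Inl 1},
     {Inl 2, Inl 3}, {Inr 2, Inl 3}, {Inr 3, Inl 2},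
     {Inl 3, Inl 4}, {Inr 3, Inl 4}, {Inr 4, Inl 3},
     {Inl 4, Inl 5}, {Inr 4, Inl 5}, {Inr 5, Inl 4},
     {Inl 2, Inl 4}, {Inr 2, Inl 4}, {Inr 4, Inl 2}}"
  by (simp add: bull_edges_def splitting_edges_insert splitting_edges_empty)

definition bull_splitting_labeling :: "nat + nat \<Rightarrow> int" where
  "bull_splitting_labeling x =
    (case x of Inl v \<Rightarrow> if v = 5 then -1 else 1 | Inr v \<Rightarrow> if v = 2 then 1 else -1)"

(* Each class is listed in the order of the enumeration it is filtered from, so that
   unfolding with Collect_mem_insert produces it verbatim; set extensionality on sets of
   doubletons would be far too slow here. *)
lemma bull_splitting_labeling_vertex_classes:
  "{v \<in> splitting_vertices bull_vertices. bull_splitting_labeling v = -1} =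
    {Inr 1, Inr 3, Inr 4, Inl 5, Inr 5}"
  "{v \<in> splitting_vertices bull_vertices. bull_splitting_labeling v = 1} =
    {Inl 1, Inl 2, Inr 2, Inl 3, Inl 4}"
  unfolding splitting_vertices_bull Collect_mem_insert
  by (simp_all add: bull_splitting_labeling_def)

lemma bull_splitting_labeling_edge_classes:
  "{e \<in> splitting_edges bull_edges. edge_label bull_splitting_labeling e = -1} =
    {{Inr 1, Inl 2}, {Inr 3, Inl 2}, {Inr 3, Inl 4}, {Inr 4, Inl 3},
     {Inl 4, Inl 5}, {Inr 5, Inl 4}, {Inr 4, Inl 2}}"
  "{e \<in> splitting_edges bull_edges. edge_label bull_splitting_labeling e = 1} =
    {{Inl 1, Inl 2}, {Inr 2, Inl 1}, {Inl 2, Inl 3}, {Inr 2, Inl 3},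
     {Inl 3, Inl 4}, {Inr 4, Inl 5}, {Inl 2, Inl 4}, {Inr 2, Inl 4}}"
  unfolding splitting_edges_bull Collect_mem_insert
  by (simp_all add: edge_label_doubleton bull_splitting_labeling_def)

theorem theorem2p2:
  shows "signed_product_cordial (splitting_vertices bull_vertices) (splitting_edges bull_edges)"
proof -
  have "\<forall>v \<in> splitting_vertices bull_vertices.
      bull_splitting_labeling v = 1 \<or> bull_splitting_labeling v = -1"
    by (auto simp: splitting_vertices_bull bull_splitting_labeling_def)
  moreover have "card {v \<in> splitting_vertices bull_vertices. bull_splitting_labeling v = -1} = 5"
    and "card {v \<in> splitting_vertices bull_vertices. bull_splitting_labeling v = 1} = 5"
    by (simp_all add: bull_splitting_labeling_vertex_classes)
  moreover have "card {e \<in> splitting_edges bull_edges. edge_label bull_splitting_labeling e = -1} = 7"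
    and "card {e \<in> splitting_edges bull_edges. edge_label bull_splitting_labeling e = 1} = 8"
    by (simp_all add: bull_splitting_labeling_edge_classes doubleton_eq_iff)
  ultimately have "signed_product_cordial_labeling
      (splitting_vertices bull_vertices) (splitting_edges bull_edges) bull_splitting_labeling"
    by (simp add: signed_product_cordial_labeling_def)
  then show ?thesis
    by (auto simp: signed_product_cordial_def)
qed

end
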